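(* For $R\in\mathbb{R}_+$, let $p,p'\in\mathbb{R}^2$ satisfy $\|p-p'\|\le R$. Then the area $A$ of $B_R(p')\cap B_R^c(p)$ satisfies $A\le\frac{2\sqrt3+3}{3}R\,\|p-p'\|$.
   Context: $B_R(p)$ is the closed Euclidean ball in $\mathbb{R}^2$ of radius $R$ centered at $p$, and $B_R^c(p)$ its complement; area means Lebesgue measure. *)

theory Defs
  imports "HOL-Analysis.Analysis"
begin

end

theory Submission
  imports Defs
begin

(* Write p' = p + d u with norm u = 1 and d = dist p p', and let v be u rotated by a right angle.
   A point of cball p' R outside cball p R lies on the right half of the circle bounding
   cball p R translated by s u for some 0 <= s <= d; in coordinates it is
   p + (sqrt (R^2 - t^2) + s) u + t v with |t| < R, except for the two points p' +- R v.
   The map (t, s) |-> p + (sqrt (R^2 - t^2) + s) u + t v is a shear followed by a rigid motion,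
   so its Jacobian determinant has modulus 1 and the image of ]-R, R[ x [0, d] has area at most
   2 R d.  As 2 <= (2 sqrt 3 + 3) / 3, this proves the claim, even without the hypothesis
   dist p p' <= R. *)

lemma measure_image_le_of_unimodular_derivative:
  fixes f :: "real^('n::{finite,wellorder}) \<Rightarrow> real^('n::{finite,wellorder})"
  assumes S: "S \<in> lmeasurable"
    and deriv: "\<And>x. x \<in> S \<Longrightarrow> (f has_derivative f' x) (at x within S)"
    and unimodular: "\<And>x. x \<in> S \<Longrightarrow> \<bar>det (matrix (f' x))\<bar> = 1"
  shows "f ` S \<in> lmeasurable" and "measure lebesgue (f ` S) \<le> measure lebesgue S"
proof -
  have int: "(\<lambda>x. \<bar>det (matrix (f' x))\<bar>) integrable_on S"
    using integrable_on_const[OF S, of 1] by (rule integrable_eq) (simp add: unimodular)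
  show "f ` S \<in> lmeasurable"
    using fmeasurableD[OF S] deriv int by (rule measurable_differentiable_image)
  have "measure lebesgue (f ` S) \<le> integral S (\<lambda>x. \<bar>det (matrix (f' x))\<bar>)"
    using fmeasurableD[OF S] deriv int by (rule measure_differentiable_image)
  also have "\<dots> = integral S (\<lambda>x. 1)"
    by (rule integral_cong) (rule unimodular)
  also have "\<dots> = measure lebesgue S"
    by (rule lmeasure_integral[OF S, symmetric])
  finally show "measure lebesgue (f ` S) \<le> measure lebesgue S" .
qed

definition rot90 :: "real^2 \<Rightarrow> real^2" where
  "rot90 u = vector [-(u$2), u$1]"

lemma power2_norm_vec2: "(norm (x::real^2))\<^sup>2 = (x$1)\<^sup>2 + (x$2)\<^sup>2"
  by (simp add: norm_vec_def L2_set_def sum_2)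

lemma inner_vec2: "inner (x::real^2) y = x$1 * y$1 + x$2 * y$2"
  by (simp add: inner_vec_def sum_2)

lemma inner_rot90_self: "inner u (rot90 u) = 0"
  by (simp add: rot90_def inner_vec2)

lemma norm_rot90: "norm (rot90 u) = norm u"
  by (simp add: norm_eq_sqrt_inner inner_vec2 rot90_def add.commute)

lemma rot90_expansion:
  assumes "norm u = 1"
  shows "x = inner x u *\<^sub>R u + inner x (rot90 u) *\<^sub>R rot90 u"
proof -
  have u: "(u$1)\<^sup>2 + (u$2)\<^sup>2 = 1" using assms power2_norm_vec2[of u] by simp
  show ?thesis
    using u by (simp add: vec_eq_iff forall_2 inner_vec2 rot90_def) algebra
qed

lemma power2_norm_rot90_combination:
  assumes "norm u = 1"
  shows "(norm (a *\<^sub>R u + b *\<^sub>R rot90 u))\<^sup>2 = a\<^sup>2 + b\<^sup>2"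
proof -
  have "inner u u = 1" "inner (rot90 u) (rot90 u) = 1"
    using assms by (simp_all add: norm_rot90 flip: norm_eq_1)
  then show ?thesis
    unfolding power2_norm_eq_inner
    by (simp add: inner_add_left inner_add_right inner_rot90_self inner_commute[of "rot90 u" u]
        power2_eq_square)
qed

lemma det_matrix_shear_rot90:
  assumes "norm u = 1"
  shows "det (matrix (\<lambda>w::real^2. (c * w$1 + w$2) *\<^sub>R u + w$1 *\<^sub>R rot90 u)) = -1"
proof -
  have u: "(u$1)\<^sup>2 + (u$2)\<^sup>2 = 1" using assms power2_norm_vec2[of u] by simp
  show ?thesis
    using u by (simp add: det_2 matrix_def rot90_def axis_def) algebra
qed

lemma vec_nth_has_derivative [derivative_intros]:
  "((\<lambda>x::real^'n. x$i) has_derivative (\<lambda>w. w$i)) F"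
  by (simp add: bounded_linear_imp_has_derivative bounded_linear_vec_nth)

lemma has_real_derivative_sqrt_circle:
  fixes t R :: real
  assumes "-R < t" "t < R"
  shows "((\<lambda>t. sqrt (R\<^sup>2 - t\<^sup>2)) has_real_derivative - t / sqrt (R\<^sup>2 - t\<^sup>2)) (at t)"
proof -
  have "\<bar>t\<bar> < R"
    using assms by auto
  then have "t\<^sup>2 < R\<^sup>2"
    using power_strict_mono[OF _ abs_ge_zero, of t R 2] by simp
  then show ?thesis
    by (auto intro!: derivative_eq_intros) (simp add: divide_inverse_commute)
qed

lemma measure_sheared_strip_le:
  fixes g g' :: "real \<Rightarrow> real" and p u :: "real^2"
  assumes u: "norm u = 1" and "a \<le> b" "0 \<le> d"
    and g: "\<And>t. a < t \<Longrightarrow> t < b \<Longrightarrow> (g has_real_derivative g' t) (at t)"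
  defines "strip \<equiv> {p + (g t + s) *\<^sub>R u + t *\<^sub>R rot90 u | t s. a < t \<and> t < b \<and> 0 \<le> s \<and> s \<le> d}"
  shows "strip \<in> lmeasurable" and "measure lebesgue strip \<le> (b - a) * d"
proof -
  define D where "D = {x::real^2. a < x$1 \<and> x$1 < b \<and> 0 \<le> x$2 \<and> x$2 \<le> d}"
  define phi where "phi x = p + (g (x$1) + x$2) *\<^sub>R u + x$1 *\<^sub>R rot90 u" for x :: "real^2"
  have box: "D \<subseteq> cbox (vector [a, 0]) (vector [b, d])"
    by (auto simp: D_def mem_box_cart forall_2)
  have "D \<in> sets borel"
    unfolding D_def by measurable
  then have "D \<in> sets lebesgue"
    by simp
  then have D: "D \<in> lmeasurable"
    by (rule fmeasurableI2[OF lmeasurable_cbox box])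
  have "measure lebesgue D \<le> measure lebesgue (cbox (vector [a, 0]) (vector [b, d]) :: (real^2) set)"
    using box D by (intro measure_mono_fmeasurable) auto
  also have "\<dots> = (b - a) * d"
  proof -
    have "vector [a, 0] \<in> cbox (vector [a, 0]) (vector [b, d] :: real^2)"
      using assms by (simp add: mem_box_cart forall_2)
    then have "cbox (vector [a, 0]) (vector [b, d] :: real^2) \<noteq> {}"
      by blast
    from content_cbox_cart[OF this] show ?thesis
      by (simp add: UNIV_2)
  qed
  finally have mD: "measure lebesgue D \<le> (b - a) * d" .
  have deriv: "(phi has_derivative (\<lambda>w. (g' (x$1) * w$1 + w$2) *\<^sub>R u + w$1 *\<^sub>R rot90 u)) (at x within D)"
    if "x \<in> D" for x
  proof -
    have "(g has_derivative (*) (g' (x$1))) (at (x$1))"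
      using g that by (auto simp: D_def has_field_derivative_def mult.commute)
    then have "((\<lambda>x. g (x$1)) has_derivative (\<lambda>w. g' (x$1) * w$1)) (at x)"
      by (rule has_derivative_compose[OF vec_nth_has_derivative])
    then have "(phi has_derivative (\<lambda>w. (g' (x$1) * w$1 + w$2) *\<^sub>R u + w$1 *\<^sub>R rot90 u)) (at x)"
      unfolding phi_def by (auto intro!: derivative_eq_intros simp: algebra_simps)
    then show ?thesis
      by (rule has_derivative_at_withinI)
  qed
  have unimodular: "\<bar>det (matrix (\<lambda>w. (g' (x$1) * w$1 + w$2) *\<^sub>R u + w$1 *\<^sub>R rot90 u))\<bar> = 1"
    for x :: "real^2"
    by (simp add: det_matrix_shear_rot90[OF u])
  have strip_eq: "strip = phi ` D"
  proof
    show "phi ` D \<subseteq> strip"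
      by (auto simp: strip_def phi_def D_def)
    show "strip \<subseteq> phi ` D"
    proof
      fix y
      assume "y \<in> strip"
      then obtain t s where "y = phi (vector [t, s])" "vector [t, s] \<in> D"
        by (auto simp: strip_def phi_def D_def)
      then show "y \<in> phi ` D"
        by blast
    qed
  qed
  show "strip \<in> lmeasurable"
    unfolding strip_eq by (rule measure_image_le_of_unimodular_derivative(1)[OF D deriv unimodular])
  have "measure lebesgue strip \<le> measure lebesgue D"
    unfolding strip_eq by (rule measure_image_le_of_unimodular_derivative(2)[OF D deriv unimodular])
  with mD show "measure lebesgue strip \<le> (b - a) * d"
    by linarith
qed

lemma crescent_coordinates:
  fixes a b d R :: real
  assumes inside: "(a - d)\<^sup>2 + b\<^sup>2 \<le> R\<^sup>2" and outside: "R\<^sup>2 < a\<^sup>2 + b\<^sup>2"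
    and "0 < d" "0 \<le> R"
  shows "a = d \<and> \<bar>b\<bar> = R \<or>
         \<bar>b\<bar> < R \<and> sqrt (R\<^sup>2 - b\<^sup>2) < a \<and> a \<le> sqrt (R\<^sup>2 - b\<^sup>2) + d"
proof (cases "\<bar>b\<bar> = R")
  case True
  then have "b\<^sup>2 = R\<^sup>2"
    by (metis power2_abs)
  then have "(a - d)\<^sup>2 \<le> 0"
    using inside by linarith
  then show ?thesis
    using True by simp
next
  case False
  define h where "h = sqrt (R\<^sup>2 - b\<^sup>2)"
  have "b\<^sup>2 \<le> R\<^sup>2"
    using inside zero_le_power2[of "a - d"] by linarith
  then have "\<bar>b\<bar> \<le> R"
    using abs_le_square_iff[of b R] \<open>0 \<le> R\<close> by simp
  with False have "\<bar>b\<bar> < R" by simp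
  have "h < \<bar>a\<bar>"
    unfolding h_def using outside by (intro real_less_lsqrt) auto
  moreover have "\<bar>a - d\<bar> \<le> h"
    unfolding h_def using inside by (intro real_le_rsqrt) auto
  ultimately have "h < a" "a \<le> h + d"
    using \<open>0 < d\<close> by (cases "0 \<le> a"; simp)+
  with \<open>\<bar>b\<bar> < R\<close> show ?thesis
    by (simp add: h_def)
qed

text \<open>The two exceptional points correspond to \<open>t = \<plusminus>R\<close>, where the semicircle
  \<open>t \<mapsto> sqrt (R\<^sup>2 - t\<^sup>2)\<close> is not differentiable; they are a null set.\<close>

lemma crescent_subset_sheared_strip:
  fixes p u :: "real^2"
  assumes u: "norm u = 1" and "0 < d"
  shows "cball (p + d *\<^sub>R u) R - cball p R \<subseteq>
           {p + (sqrt (R\<^sup>2 - t\<^sup>2) + s) *\<^sub>R u + t *\<^sub>R rot90 u | t s. -R < t \<and> t < R \<and> 0 \<le> s \<and> s \<le> d}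
           \<union> {p + d *\<^sub>R u + R *\<^sub>R rot90 u, p + d *\<^sub>R u - R *\<^sub>R rot90 u}"
    (is "_ \<subseteq> ?strip \<union> ?ends")
proof
  fix x
  assume x: "x \<in> cball (p + d *\<^sub>R u) R - cball p R"
  define a where "a = inner (x - p) u"
  define b where "b = inner (x - p) (rot90 u)"
  have x_eq: "x = p + a *\<^sub>R u + b *\<^sub>R rot90 u"
    using rot90_expansion[OF u, of "x - p"] by (simp add: a_def b_def algebra_simps)
  have "dist x (p + d *\<^sub>R u) = norm ((a - d) *\<^sub>R u + b *\<^sub>R rot90 u)"
    by (simp add: dist_norm x_eq algebra_simps)
  then have inside: "norm ((a - d) *\<^sub>R u + b *\<^sub>R rot90 u) \<le> R"
    using x by (simp add: dist_commute)
  then have "0 \<le> R"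
    using norm_ge_zero order_trans by metis
  have "dist x p = norm (a *\<^sub>R u + b *\<^sub>R rot90 u)"
    by (simp add: dist_norm x_eq)
  then have outside: "R < norm (a *\<^sub>R u + b *\<^sub>R rot90 u)"
    using x by (simp add: dist_commute)
  have "(a - d)\<^sup>2 + b\<^sup>2 \<le> R\<^sup>2"
    using power_mono[OF inside norm_ge_zero, of 2] by (simp add: power2_norm_rot90_combination[OF u])
  moreover have "R\<^sup>2 < a\<^sup>2 + b\<^sup>2"
    using power_strict_mono[OF outside \<open>0 \<le> R\<close>, of 2] by (simp add: power2_norm_rot90_combination[OF u])
  ultimately have "a = d \<and> \<bar>b\<bar> = R \<or>
      \<bar>b\<bar> < R \<and> sqrt (R\<^sup>2 - b\<^sup>2) < a \<and> a \<le> sqrt (R\<^sup>2 - b\<^sup>2) + d"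
    by (rule crescent_coordinates[OF _ _ \<open>0 < d\<close> \<open>0 \<le> R\<close>])
  then show "x \<in> ?strip \<union> ?ends"
  proof (elim disjE conjE)
    assume "a = d" "\<bar>b\<bar> = R"
    then have "b = R \<or> b = -R"
      by auto
    then have "x = p + d *\<^sub>R u + R *\<^sub>R rot90 u \<or> x = p + d *\<^sub>R u - R *\<^sub>R rot90 u"
      using \<open>a = d\<close> by (auto simp: x_eq)
    then have "x \<in> ?ends"
      by simp
    then show ?thesis ..
  next
    assume "\<bar>b\<bar> < R" "sqrt (R\<^sup>2 - b\<^sup>2) < a" "a \<le> sqrt (R\<^sup>2 - b\<^sup>2) + d"
    then have bounds: "-R < b" "b < R" "0 \<le> a - sqrt (R\<^sup>2 - b\<^sup>2)" "a - sqrt (R\<^sup>2 - b\<^sup>2) \<le> d"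
      by auto
    have x_expr: "x = p + (sqrt (R\<^sup>2 - b\<^sup>2) + (a - sqrt (R\<^sup>2 - b\<^sup>2))) *\<^sub>R u + b *\<^sub>R rot90 u"
      by (simp add: x_eq)
    have "x \<in> ?strip"
      unfolding x_expr using bounds by blast
    then show ?thesis ..
  qed
qed
lemma measure_cball_diff_cball_le:
  fixes p p' :: "real^2"
  assumes "0 \<le> R"
  shows "measure lebesgue (cball p' R - cball p R) \<le> 2 * R * dist p p'"
proof (cases "p' = p")
  case True
  then show ?thesis
    by simp
next
  case False
  define d where "d = dist p p'"
  define u where "u = (1 / d) *\<^sub>R (p' - p)"
  have "0 < d"
    using False by (simp add: d_def)
  have u: "norm u = 1"
    using \<open>0 < d\<close> by (simp add: u_def d_def dist_norm norm_minus_commute)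
  have p': "p' = p + d *\<^sub>R u"
    using \<open>0 < d\<close> by (simp add: u_def)
  let ?strip = "{p + (sqrt (R\<^sup>2 - t\<^sup>2) + s) *\<^sub>R u + t *\<^sub>R rot90 u | t s. -R < t \<and> t < R \<and> 0 \<le> s \<and> s \<le> d}"
  let ?ends = "{p + d *\<^sub>R u + R *\<^sub>R rot90 u, p + d *\<^sub>R u - R *\<^sub>R rot90 u}"
  have strip: "?strip \<in> lmeasurable" "measure lebesgue ?strip \<le> (R - -R) * d"
    using measure_sheared_strip_le[OF u _ _ has_real_derivative_sqrt_circle, where a="-R" and b=R and d=d and p=p]
      assms \<open>0 < d\<close> by auto
  have ends: "?ends \<in> null_sets lebesgue"
    by (simp add: negligible_iff_null_sets[symmetric])
  have "?strip \<union> ?ends \<in> lmeasurable"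
    by (rule fmeasurable.Un[OF strip(1) fmeasurableI_null_sets[OF ends]])
  moreover have "cball p' R - cball p R \<subseteq> ?strip \<union> ?ends"
    unfolding p' using crescent_subset_sheared_strip[OF u \<open>0 < d\<close>] .
  ultimately have "measure lebesgue (cball p' R - cball p R) \<le> measure lebesgue (?strip \<union> ?ends)"
    by (intro measure_mono_fmeasurable) auto
  also have "\<dots> = measure lebesgue ?strip"
    using fmeasurableD[OF strip(1)] ends by (rule measure_Un_null_set)
  also have "\<dots> \<le> 2 * R * dist p p'"
    using strip(2) by (simp add: d_def)
  finally show ?thesis .
qed

theorem lemmaB1:
  fixes p p' :: "real ^ 2" and R :: real
  assumes "R > 0" and "dist p p' \<le> R"
  shows "measure lebesgue (cball p' R \<inter> - cball p R)
           \<le> (2 * sqrt 3 + 3) / 3 * R * dist p p'"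
proof -
  have "measure lebesgue (cball p' R \<inter> - cball p R) \<le> 2 * R * dist p p'"
    using measure_cball_diff_cball_le[of R p' p] \<open>R > 0\<close> by (simp add: Diff_eq)
  also have "\<dots> \<le> (2 * sqrt 3 + 3) / 3 * R * dist p p'"
  proof -
    have "3 / 2 \<le> sqrt (3::real)"
      by (rule real_le_rsqrt) (simp add: power2_eq_square)
    then show ?thesis
      using \<open>R > 0\<close> by (intro mult_right_mono) auto
  qed
  finally show ?thesis .
qed

end
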